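(* Suppose $n\geq 4$ and $1\leq d\leq n-1$, and let $N=|\Omega_{n,d}|$. The smallest eigenvalue $\lambda_{N-1}$ of the transition matrix of the switch chain on $\Omega_{n,d}$ satisfies \[ (1+\lambda_{N-1})^{-1}\leq \tfrac14\, d^2n^2. \]
   Context: $\Omega_{n,d}$ is the set of simple digraphs on $[n]$ in which every vertex has in-degree and out-degree $d$. The switch chain: from $G$, choose an unordered pair of distinct arcs $\{(i,j),(k,\ell)\}$ uniformly at random; if $|\{i,j,k,\ell\}|=4$ and neither $(i,\ell)$ nor $(k,j)$ is an arc of $G$, replace $(i,j),(k,\ell)$ by $(i,\ell),(k,j)$; otherwise stay at $G$. Its transition matrix is symmetric, with real eigenvalues $1=\lambda_0>\lambda_1\geq\cdots\geq\lambda_{N-1}\geq-1$. *)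

theory Defs
  imports Complex_Main
begin

text \<open>A simple digraph on [n] = {1..n} is represented by its arc set
  (a set of ordered pairs of vertices, no loops).\<close>

type_synonym digraph = "(nat \<times> nat) set"

definition out_deg :: "digraph \<Rightarrow> nat \<Rightarrow> nat" where
  "out_deg G i = card {j. (i, j) \<in> G}"

definition in_deg :: "digraph \<Rightarrow> nat \<Rightarrow> nat" where
  "in_deg G j = card {i. (i, j) \<in> G}"

definition Omega :: "nat \<Rightarrow> nat \<Rightarrow> digraph set" where
  "Omega n d = {G. G \<subseteq> {1..n} \<times> {1..n} \<and> (\<forall>i. (i, i) \<notin> G) \<and>
      (\<forall>v\<in>{1..n}. out_deg G v = d \<and> in_deg G v = d)}"

fun switch :: "digraph \<Rightarrow> nat \<times> nat \<Rightarrow> nat \<times> nat \<Rightarrow> digraph" where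
  "switch G (i, j) (k, l) =
     (if card {i, j, k, l} = 4 \<and> (i, l) \<notin> G \<and> (k, j) \<notin> G
      then (G - {(i, j), (k, l)}) \<union> {(i, l), (k, j)} else G)"

definition arc_pairs :: "digraph \<Rightarrow> (nat \<times> nat) set set" where
  "arc_pairs G = {{a, b} | a b. a \<in> G \<and> b \<in> G \<and> a \<noteq> b}"

text \<open>Transition probability of the switch chain from G to H: the proportion of
  unordered pairs of distinct arcs whose switch leads to H (switch is symmetric in
  the two arcs, so this is well defined).\<close>
definition switch_P :: "digraph \<Rightarrow> digraph \<Rightarrow> real" where
  "switch_P G H =
     real (card {{a, b} | a b. a \<in> G \<and> b \<in> G \<and> a \<noteq> b \<and> switch G a b = H})
     / real (card (arc_pairs G))"

definition switch_eigenvalues :: "nat \<Rightarrow> nat \<Rightarrow> real set" where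
  "switch_eigenvalues n d = {lam. \<exists>v :: digraph \<Rightarrow> real.
      (\<exists>G\<in>Omega n d. v G \<noteq> 0) \<and>
      (\<forall>G\<in>Omega n d. (\<Sum>H\<in>Omega n d. switch_P G H * v H) = lam * v G)}"

end

theory Submission
  imports Defs "Jordan_Normal_Form.Char_Poly"
begin

text \<open>
  The bound follows from Gershgorin's theorem for a stochastic matrix with a large diagonal.
  If the transition matrix P on a finite set is stochastic and every holding probability
  P G G is at least p, then every eigenvalue is at least 2 p - 1. For the switch chain on
  the state space Omega n d each digraph has n d arcs, so there are at most (n d)^2 / 2
  unordered arc pairs, and at least one of them (two arcs sharing a vertex) is rejected.
  Hence P G G \<ge> 2 / (n d)^2, so 1 + lambda_min \<ge> 4 / (n d)^2, which is the claim.
\<close>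

definition kernel_eigenvalues :: "'a set \<Rightarrow> ('a \<Rightarrow> 'a \<Rightarrow> real) \<Rightarrow> real set" where
  "kernel_eigenvalues S P = {lam. \<exists>v :: 'a \<Rightarrow> real. (\<exists>x\<in>S. v x \<noteq> 0) \<and>
      (\<forall>x\<in>S. (\<Sum>y\<in>S. P x y * v y) = lam * v x)}"

lemma switch_eigenvalues_kernel:
  "switch_eigenvalues n d = kernel_eigenvalues (Omega n d) switch_P"
  by (simp add: switch_eigenvalues_def kernel_eigenvalues_def)

text \<open>A kernel on a finite set has finitely many eigenvalues: after enumerating S they are
  roots of the (monic, hence nonzero) characteristic polynomial of an N x N matrix.\<close>

lemma finite_kernel_eigenvalues:
  assumes S: "finite S"
  shows "finite (kernel_eigenvalues S P)"
proof -
  define N where "N = card S"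
  obtain f where f: "bij_betw f {0..<N} S" using ex_bij_betw_nat_finite[OF S] N_def by blast
  define A where "A = mat N N (\<lambda>(i, j). P (f i) (f j))"
  have A: "A \<in> carrier_mat N N" unfolding A_def by simp
  have "eigenvalue A lam" if "lam \<in> kernel_eigenvalues S P" for lam
  proof -
    from that obtain v where nz: "\<exists>x\<in>S. v x \<noteq> 0"
      and eig: "\<forall>x\<in>S. (\<Sum>y\<in>S. P x y * v y) = lam * v x"
      unfolding kernel_eigenvalues_def by blast
    define w where "w = vec N (\<lambda>i. v (f i))"
    have "w \<noteq> 0\<^sub>v N"
    proof
      assume "w = 0\<^sub>v N"
      obtain i where "i < N" "v (f i) \<noteq> 0"
        using nz f unfolding bij_betw_def by auto
      moreover have "w $ i = 0" using \<open>w = 0\<^sub>v N\<close> \<open>i < N\<close> by simp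
      ultimately show False by (simp add: w_def)
    qed
    moreover have "A *\<^sub>v w = lam \<cdot>\<^sub>v w"
    proof (rule eq_vecI)
      fix i assume "i < dim_vec (lam \<cdot>\<^sub>v w)"
      then have i: "i < N" by (simp add: w_def)
      have "(A *\<^sub>v w) $ i = (\<Sum>j\<in>{0..<N}. P (f i) (f j) * v (f j))"
        using i unfolding A_def w_def by (simp add: scalar_prod_def)
      also have "\<dots> = (\<Sum>y\<in>S. P (f i) y * v y)"
        using sum.reindex_bij_betw[OF f, of "\<lambda>y. P (f i) y * v y"] by simp
      also have "\<dots> = lam * v (f i)" using eig f i unfolding bij_betw_def by auto
      finally show "(A *\<^sub>v w) $ i = (lam \<cdot>\<^sub>v w) $ i" using i by (simp add: w_def)
    qed (simp add: A_def w_def)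
    ultimately have "eigenvector A w lam"
      using A unfolding eigenvector_def w_def by simp
    then show ?thesis unfolding eigenvalue_def by blast
  qed
  then have "kernel_eigenvalues S P \<subseteq> {x. poly (char_poly A) x = 0}"
    using eigenvalue_root_char_poly[OF A] by blast
  moreover have "char_poly A \<noteq> 0" using degree_monic_char_poly[OF A] by auto
  ultimately show ?thesis using poly_roots_finite finite_subset by blast
qed

text \<open>Constant vectors show that 1 is an eigenvalue of a stochastic kernel, so the set
  of eigenvalues is nonempty and has a minimum.\<close>

lemma stochastic_eigenvalue_one:
  assumes "S \<noteq> {}" and "\<And>x. x \<in> S \<Longrightarrow> (\<Sum>y\<in>S. P x y) = 1"
  shows "1 \<in> kernel_eigenvalues S P"
  using assms unfolding kernel_eigenvalues_def by (intro CollectI exI[of _ "\<lambda>_. 1"]) auto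

text \<open>Gershgorin's bound for a stochastic kernel whose holding probabilities are at least p:
  every eigenvalue lies in a disc centred at some P x x of radius 1 - P x x, hence is at
  least 2 p - 1. Evaluate the eigen-equation at a coordinate where the eigenvector has
  maximal modulus.\<close>

lemma lazy_stochastic_eigenvalue_bound:
  assumes fin: "finite S"
    and nonneg: "\<And>x y. x \<in> S \<Longrightarrow> y \<in> S \<Longrightarrow> P x y \<ge> 0"
    and stoch: "\<And>x. x \<in> S \<Longrightarrow> (\<Sum>y\<in>S. P x y) = 1"
    and lazy: "\<And>x. x \<in> S \<Longrightarrow> P x x \<ge> p"
    and lam: "lam \<in> kernel_eigenvalues S P"
  shows "lam \<ge> 2 * p - 1"
proof -
  obtain v where nz: "\<exists>x\<in>S. v x \<noteq> 0" and eig: "\<forall>x\<in>S. (\<Sum>y\<in>S. P x y * v y) = lam * v x"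
    using lam unfolding kernel_eigenvalues_def by blast
  define m where "m = Max ((\<lambda>x. \<bar>v x\<bar>) ` S)"
  have bound: "\<bar>v y\<bar> \<le> m" if "y \<in> S" for y unfolding m_def using fin that by auto
  have "m \<in> (\<lambda>x. \<bar>v x\<bar>) ` S" unfolding m_def using fin nz by (intro Max_in) auto
  then obtain x where x: "x \<in> S" "\<bar>v x\<bar> = m" by blast
  obtain y0 where y0: "y0 \<in> S" "v y0 \<noteq> 0" using nz by blast
  then have "m > 0" using bound[OF y0(1)] by (simp add: order_less_le_trans)
  let ?S' = "S - {x}"
  have rest: "(\<Sum>y\<in>?S'. P x y) = 1 - P x x"
    using stoch[OF x(1)] sum.remove[OF fin x(1), of "P x"] by linarith
  have "lam * v x = P x x * v x + (\<Sum>y\<in>?S'. P x y * v y)"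
    using eig x(1) sum.remove[OF fin x(1), of "\<lambda>y. P x y * v y"] by simp
  then have "(lam - P x x) * v x = (\<Sum>y\<in>?S'. P x y * v y)"
    by (simp add: left_diff_distrib)
  then have "\<bar>lam - P x x\<bar> * m = \<bar>\<Sum>y\<in>?S'. P x y * v y\<bar>"
    using x(2) abs_mult[of "lam - P x x" "v x"] by simp
  also have "\<dots> \<le> (\<Sum>y\<in>?S'. \<bar>P x y * v y\<bar>)" by (rule sum_abs)
  also have "\<dots> \<le> (\<Sum>y\<in>?S'. P x y * m)"
  proof (rule sum_mono)
    fix y assume "y \<in> ?S'"
    then have "P x y \<ge> 0" "\<bar>v y\<bar> \<le> m" using nonneg[OF x(1)] bound by auto
    then show "\<bar>P x y * v y\<bar> \<le> P x y * m" by (simp add: abs_mult mult_left_mono)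
  qed
  also have "\<dots> = (\<Sum>y\<in>?S'. P x y) * m" by (rule sum_distrib_right[symmetric])
  also have "\<dots> = (1 - P x x) * m" by (simp only: rest)
  finally have "\<bar>lam - P x x\<bar> * m \<le> (1 - P x x) * m" .
  then have "\<bar>lam - P x x\<bar> \<le> 1 - P x x" using \<open>m > 0\<close> by (rule mult_right_le_imp_le)
  then have "- (lam - P x x) \<le> 1 - P x x" by (rule abs_le_D2)
  then show ?thesis using lazy[OF x(1)] by linarith
qed

lemma lazy_stochastic_min_eigenvalue:
  assumes fin: "finite S" and ne: "S \<noteq> {}"
    and nonneg: "\<And>x y. x \<in> S \<Longrightarrow> y \<in> S \<Longrightarrow> P x y \<ge> 0"
    and stoch: "\<And>x. x \<in> S \<Longrightarrow> (\<Sum>y\<in>S. P x y) = 1"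
    and lazy: "\<And>x. x \<in> S \<Longrightarrow> P x x \<ge> p"
  shows "Min (kernel_eigenvalues S P) \<ge> 2 * p - 1"
proof -
  have "1 \<in> kernel_eigenvalues S P" by (rule stochastic_eigenvalue_one[OF ne stoch])
  then have "kernel_eigenvalues S P \<noteq> {}" by blast
  then have "Min (kernel_eigenvalues S P) \<in> kernel_eigenvalues S P"
    by (rule Min_in[OF finite_kernel_eigenvalues[OF fin]])
  then show ?thesis using lazy_stochastic_eigenvalue_bound[OF fin nonneg stoch lazy] by blast
qed

lemma card_exchange:
  assumes "finite A" "x \<in> A" "y \<notin> A"
  shows "card (insert y (A - {x})) = card A"
  using assms card_Suc_Diff1[OF assms(1,2)] by (simp add: card_insert_if)

text \<open>Replacing the arcs (i,j), (k,l) by (i,l), (k,j) preserves all out-degrees: vertex i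
  trades out-neighbour j for l, vertex k trades l for j.\<close>

lemma out_deg_exchange:
  assumes fin: "finite G"
    and ij: "(i, j) \<in> G" and kl: "(k, l) \<in> G" and il: "(i, l) \<notin> G" and kj: "(k, j) \<notin> G"
  shows "out_deg ((G - {(i, j), (k, l)}) \<union> {(i, l), (k, j)}) v = out_deg G v"
proof -
  let ?N = "\<lambda>G v. {w. (v, w) \<in> G}"
  let ?G' = "(G - {(i, j), (k, l)}) \<union> {(i, l), (k, j)}"
  have fin_N: "finite (?N G u)" for u
    using finite_imageI[OF fin, of snd] by (rule finite_subset[rotated]) force
  have "i \<noteq> k" using kl il by auto
  then consider "v = i" | "v = k" | "v \<noteq> i" "v \<noteq> k" by blast
  then show ?thesis
  proof cases
    case 1
    then have "?N ?G' v = insert l (?N G i - {j})" using \<open>i \<noteq> k\<close> by auto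
    then show ?thesis using 1 card_exchange[OF fin_N] ij il by (simp add: out_deg_def)
  next
    case 2
    then have "?N ?G' v = insert j (?N G k - {l})" using \<open>i \<noteq> k\<close> by auto
    then show ?thesis using 2 card_exchange[OF fin_N] kl kj by (simp add: out_deg_def)
  next
    case 3
    then have "?N ?G' v = ?N G v" by auto
    then show ?thesis by (simp add: out_deg_def)
  qed
qed

lemma in_deg_converse: "in_deg G v = out_deg (converse G) v"
  by (simp add: in_deg_def out_deg_def)

text \<open>In-degrees are out-degrees of the converse digraph, and the converse of an exchange
  is again an exchange; so in-degrees are preserved as well.\<close>

lemma in_deg_exchange:
  assumes "finite G"
    and "(i, j) \<in> G" "(k, l) \<in> G" "(i, l) \<notin> G" "(k, j) \<notin> G"
  shows "in_deg ((G - {(i, j), (k, l)}) \<union> {(i, l), (k, j)}) v = in_deg G v"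
proof -
  have "converse ((G - {(i, j), (k, l)}) \<union> {(i, l), (k, j)})
          = (converse G - {(j, i), (l, k)}) \<union> {(j, k), (l, i)}" by auto
  moreover have "out_deg \<dots> v = out_deg (converse G) v"
    by (rule out_deg_exchange) (use assms in auto)
  ultimately show ?thesis by (simp add: in_deg_converse)
qed

lemma Omega_subset: "G \<in> Omega n d \<Longrightarrow> G \<subseteq> {1..n} \<times> {1..n}"
  by (simp add: Omega_def)

lemma finite_Omega: "finite (Omega n d)"
  by (rule finite_subset[of _ "Pow ({1..n} \<times> {1..n})"]) (auto simp: Omega_def)

lemma finite_Omega_member: "G \<in> Omega n d \<Longrightarrow> finite G"
  by (rule finite_subset[OF Omega_subset]) auto

lemma switch_Omega:
  assumes G: "G \<in> Omega n d" and a: "a \<in> G" and b: "b \<in> G"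
  shows "switch G a b \<in> Omega n d"
proof -
  obtain i j k l where ab: "a = (i, j)" "b = (k, l)" by (cases a, cases b)
  show ?thesis
  proof (cases "card {i, j, k, l} = 4 \<and> (i, l) \<notin> G \<and> (k, j) \<notin> G")
    case False
    then have "switch G a b = G"
      unfolding ab by (simp only: switch.simps if_not_P[OF False] if_False)
    then show ?thesis using G by simp
  next
    case True
    let ?G' = "(G - {(i, j), (k, l)}) \<union> {(i, l), (k, j)}"
    have distinct: "i \<noteq> l" "k \<noteq> j"
      using True by (auto simp: card_insert_if split: if_splits)
    have arcs: "(i, j) \<in> G" "(k, l) \<in> G" "(i, l) \<notin> G" "(k, j) \<notin> G"
      using True a b ab by auto
    note fin = finite_Omega_member[OF G]
    have "?G' \<subseteq> {1..n} \<times> {1..n}" using Omega_subset[OF G] arcs by auto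
    moreover have "\<forall>x. (x, x) \<notin> ?G'" using G distinct by (auto simp: Omega_def)
    moreover have "\<forall>v\<in>{1..n}. out_deg ?G' v = d \<and> in_deg ?G' v = d"
      using G out_deg_exchange[OF fin arcs] in_deg_exchange[OF fin arcs] by (simp add: Omega_def)
    ultimately have "?G' \<in> Omega n d" by (simp add: Omega_def)
    moreover have "switch G a b = ?G'" unfolding ab by (simp only: switch.simps if_P[OF True])
    ultimately show ?thesis by simp
  qed
qed

text \<open>Summing out-degrees: every digraph of the state space has n d arcs.\<close>

lemma card_Omega_member:
  assumes G: "G \<in> Omega n d" shows "card G = n * d"
proof -
  have fin: "finite {j. (i, j) \<in> G}" for i
    by (rule finite_subset[of _ "{1..n}"]) (use Omega_subset[OF G] in auto)
  have "G = Sigma {1..n} (\<lambda>i. {j. (i, j) \<in> G})" using Omega_subset[OF G] by auto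
  also have "card \<dots> = (\<Sum>i\<in>{1..n}. card {j. (i, j) \<in> G})"
    by (rule card_SigmaI) (use fin in auto)
  also have "\<dots> = (\<Sum>i\<in>{1..n}. d)" using G by (simp add: Omega_def out_deg_def)
  finally show ?thesis by simp
qed

lemma card_arc_pairs:
  assumes "finite G" shows "2 * card (arc_pairs G) \<le> card G * card G"
proof -
  have "arc_pairs G \<subseteq> {B. B \<subseteq> G \<and> card B = 2}" unfolding arc_pairs_def by auto
  then have "card (arc_pairs G) \<le> card G choose 2"
    using card_mono[of "{B. B \<subseteq> G \<and> card B = 2}"] n_subsets[OF assms] assms by simp
  moreover have "even (card G * (card G - 1))" by auto
  then have "2 * (card G choose 2) = card G * (card G - 1)"
    by (simp only: choose_two even_two_times_div_two)
  ultimately show ?thesis by (metis diff_le_self mult_le_mono2 order_trans)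
qed

lemma card_preimage_bij:
  assumes "bij_betw f A C" shows "card {x\<in>A. f x \<in> B} = card (C \<inter> B)"
proof -
  have "bij_betw f {x\<in>A. f x \<in> B} (C \<inter> B)"
    using assms unfolding bij_betw_def inj_on_def by auto
  then show ?thesis by (rule bij_betw_same_card)
qed

lemma affine_mod_bij:
  fixes n :: nat and s c :: int
  assumes n: "n \<ge> 1" and s: "\<bar>s\<bar> = 1"
  shows "bij_betw (\<lambda>x. (s * int x + c) mod int n) {1..n} {0..<int n}"
proof -
  let ?f = "\<lambda>x. (s * int x + c) mod int n"
  have "inj_on ?f {1..n}"
  proof (rule inj_onI)
    fix x y assume xy: "x \<in> {1..n}" "y \<in> {1..n}" "?f x = ?f y"
    then have "int n dvd s * (int x - int y)"
      by (simp add: mod_eq_dvd_iff algebra_simps)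
    moreover have "s = 1 \<or> s = - 1" using s by linarith
    ultimately have "int n dvd int x - int y" by (auto simp: dvd_diff_commute)
    then show "x = y" using xy(1,2) dvd_imp_le_int[of "int x - int y" "int n"] by force
  qed
  moreover have "?f ` {1..n} = {0..<int n}"
  proof (rule card_subset_eq)
    show "?f ` {1..n} \<subseteq> {0..<int n}" using n by auto
    show "card (?f ` {1..n}) = card {0..<int n}" using card_image[OF \<open>inj_on ?f {1..n}\<close>] by simp
  qed simp
  ultimately show ?thesis unfolding bij_betw_def by blast
qed

text \<open>The circulant digraph joining i to the d vertices following it cyclically; it shows
  that the state space is nonempty whenever d < n.\<close>

definition circulant :: "nat \<Rightarrow> nat \<Rightarrow> digraph" where
  "circulant n d = {(i, j) \<in> {1..n} \<times> {1..n}. (int j - int i) mod int n \<in> {1..int d}}"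

lemma circulant_Omega:
  assumes n: "n \<ge> 1" and d: "d \<le> n - 1"
  shows "circulant n d \<in> Omega n d"
proof -
  have "{0..<int n} \<inter> {1..int d} = {1..int d}" using d n by auto
  then have window: "card ({0..<int n} \<inter> {1..int d}) = d" by simp
  have "out_deg (circulant n d) v = d" if "v \<in> {1..n}" for v
  proof -
    have "{j. (v, j) \<in> circulant n d} = {j \<in> {1..n}. (1 * int j + - int v) mod int n \<in> {1..int d}}"
      using that by (auto simp: circulant_def)
    also have "card \<dots> = d"
      by (rule trans[OF card_preimage_bij window]) (rule affine_mod_bij[OF n], simp)
    finally show ?thesis by (simp add: out_deg_def)
  qed
  moreover have "in_deg (circulant n d) v = d" if "v \<in> {1..n}" for v
  proof -
    have "{i. (i, v) \<in> circulant n d} = {i \<in> {1..n}. (- 1 * int i + int v) mod int n \<in> {1..int d}}"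
      using that by (auto simp: circulant_def)
    also have "card \<dots> = d"
      by (rule trans[OF card_preimage_bij window]) (rule affine_mod_bij[OF n], simp)
    finally show ?thesis by (simp add: in_deg_def)
  qed
  ultimately show ?thesis by (auto simp: Omega_def circulant_def)
qed

definition switch_pairs :: "digraph \<Rightarrow> digraph \<Rightarrow> (nat \<times> nat) set set" where
  "switch_pairs G H = {{a, b} | a b. a \<in> G \<and> b \<in> G \<and> a \<noteq> b \<and> switch G a b = H}"

lemma switch_P_switch_pairs:
  "switch_P G H = real (card (switch_pairs G H)) / real (card (arc_pairs G))"
  by (simp add: switch_P_def switch_pairs_def)

text \<open>Switching is symmetric in the two arcs, so the sets of arc pairs leading to
  different targets are disjoint; and they cover all arc pairs.\<close>

lemma switch_commute: "switch G a b = switch G b a"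
  by (cases a; cases b) (auto simp: insert_commute)

lemma switch_pairs_subset: "switch_pairs G H \<subseteq> arc_pairs G"
  unfolding switch_pairs_def arc_pairs_def by blast

lemma switch_pairs_disjoint: "H \<noteq> H' \<Longrightarrow> switch_pairs G H \<inter> switch_pairs G H' = {}"
proof (rule ccontr)
  assume "H \<noteq> H'" "switch_pairs G H \<inter> switch_pairs G H' \<noteq> {}"
  then obtain a b a' b' where "{a, b} = {a', b'}" "switch G a b = H" "switch G a' b' = H'"
    unfolding switch_pairs_def by blast
  then show False using \<open>H \<noteq> H'\<close> by (auto simp: doubleton_eq_iff switch_commute)
qed

lemma finite_arc_pairs: "finite G \<Longrightarrow> finite (arc_pairs G)"
proof -
  assume "finite G"
  have "arc_pairs G \<subseteq> (\<lambda>(a, b). {a, b}) ` (G \<times> G)"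
    unfolding arc_pairs_def by auto
  then show ?thesis using \<open>finite G\<close> finite_subset by blast
qed

lemma switch_pairs_cover:
  assumes "G \<in> Omega n d" shows "(\<Union>H\<in>Omega n d. switch_pairs G H) = arc_pairs G"
proof
  show "arc_pairs G \<subseteq> (\<Union>H\<in>Omega n d. switch_pairs G H)"
  proof
    fix s assume "s \<in> arc_pairs G"
    then obtain a b where "s = {a, b}" "a \<in> G" "b \<in> G" "a \<noteq> b" unfolding arc_pairs_def by blast
    moreover have "switch G a b \<in> Omega n d" using switch_Omega assms calculation by blast
    ultimately show "s \<in> (\<Union>H\<in>Omega n d. switch_pairs G H)" unfolding switch_pairs_def by blast
  qed
qed (use switch_pairs_subset in blast)

text \<open>Two consecutive arcs (1,j), (j,k) share the vertex j, so their switch is rejected: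
  there is always at least one way to stay at G.\<close>

lemma switch_pairs_loop:
  assumes G: "G \<in> Omega n d" and n: "n \<ge> 1" and d: "d \<ge> 1"
  shows "switch_pairs G G \<noteq> {}"
proof -
  have loopfree: "(v, v) \<notin> G" for v using G by (simp add: Omega_def)
  have out: "\<exists>w. (v, w) \<in> G" if "v \<in> {1..n}" for v
  proof (rule ccontr)
    assume "\<nexists>w. (v, w) \<in> G"
    then have "out_deg G v = 0" by (simp add: out_deg_def)
    then show False using G that d by (simp add: Omega_def)
  qed
  obtain j where j: "(1, j) \<in> G" using out n by auto
  then have "j \<in> {1..n}" using Omega_subset[OF G] by blast
  then obtain k where k: "(j, k) \<in> G" using out by blast
  have "(1, j) \<noteq> (j, k)" using j loopfree by blast
  moreover have "switch G (1, j) (j, k) = G"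
  proof -
    have "card {1, j, j, k} \<le> 3" by (simp add: card_insert_le_m1 card_insert_if)
    then show ?thesis by simp
  qed
  ultimately show ?thesis using j k unfolding switch_pairs_def by blast
qed

lemma switch_P_row_sum:
  assumes G: "G \<in> Omega n d" and n: "n \<ge> 1" and d: "d \<ge> 1"
  shows "(\<Sum>H\<in>Omega n d. switch_P G H) = 1"
proof -
  have fin: "finite (arc_pairs G)" by (rule finite_arc_pairs[OF finite_Omega_member[OF G]])
  have "(\<Sum>H\<in>Omega n d. card (switch_pairs G H)) = card (\<Union>H\<in>Omega n d. switch_pairs G H)"
    using finite_Omega fin switch_pairs_subset switch_pairs_disjoint
    by (intro card_UN_disjoint[symmetric]) (auto intro: finite_subset[OF switch_pairs_subset])
  also have "\<dots> = card (arc_pairs G)" using switch_pairs_cover[OF G] by simp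
  finally have "(\<Sum>H\<in>Omega n d. real (card (switch_pairs G H))) = real (card (arc_pairs G))"
    by (metis of_nat_sum)
  moreover have "card (arc_pairs G) \<noteq> 0"
    using switch_pairs_loop[OF G n d] switch_pairs_subset fin by (metis card_0_eq subset_empty)
  ultimately show ?thesis by (simp add: switch_P_switch_pairs flip: sum_divide_distrib)
qed

text \<open>Every holding probability is at least one over the number of arc pairs, hence at
  least 2 / (n d)^2.\<close>

lemma switch_P_holding:
  assumes G: "G \<in> Omega n d" and n: "n \<ge> 1" and d: "d \<ge> 1"
  shows "switch_P G G \<ge> 2 / (real n * real d) ^ 2"
proof -
  define M where "M = card (arc_pairs G)"
  have fin: "finite (arc_pairs G)" by (rule finite_arc_pairs[OF finite_Omega_member[OF G]])
  have stay: "card (switch_pairs G G) \<ge> 1"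
    using switch_pairs_loop[OF G n d] finite_subset[OF switch_pairs_subset fin]
    by (simp add: Suc_le_eq card_gt_0_iff)
  then have "M > 0" unfolding M_def using card_mono[OF fin switch_pairs_subset, of G] by linarith
  have "2 * real M \<le> (real n * real d) ^ 2"
    using card_arc_pairs[OF finite_Omega_member[OF G]] card_Omega_member[OF G]
    unfolding M_def by (simp add: power2_eq_square flip: of_nat_mult)
  then have "2 / (real n * real d) ^ 2 \<le> 1 / real M"
    using \<open>M > 0\<close> n d by (simp add: field_simps)
  also have "\<dots> \<le> switch_P G G"
    using stay \<open>M > 0\<close> unfolding switch_P_switch_pairs M_def by (simp add: divide_right_mono)
  finally show ?thesis .
qed

theorem mainTheorem7:
  fixes n d :: nat
  assumes "n \<ge> 4" and "1 \<le> d" and "d \<le> n - 1"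
  shows "1 + Min (switch_eigenvalues n d) > 0 \<and>
         inverse (1 + Min (switch_eigenvalues n d)) \<le> (1/4) * real d ^ 2 * real n ^ 2"
proof -
  have n: "n \<ge> 1" and d: "d \<ge> 1" using assms by auto
  define p :: real where "p = 2 / (real n * real d) ^ 2"
  have "Min (switch_eigenvalues n d) \<ge> 2 * p - 1"
    unfolding switch_eigenvalues_kernel p_def
  proof (rule lazy_stochastic_min_eigenvalue[OF finite_Omega])
    show "Omega n d \<noteq> {}" using circulant_Omega[OF n assms(3)] by blast
    show "switch_P G H \<ge> 0" for G H by (simp add: switch_P_def)
    show "(\<Sum>H\<in>Omega n d. switch_P G H) = 1" if "G \<in> Omega n d" for G
      using switch_P_row_sum[OF that n d] .
    show "switch_P G G \<ge> 2 / (real n * real d) ^ 2" if "G \<in> Omega n d" for G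
      using switch_P_holding[OF that n d] .
  qed
  moreover have "p > 0" using n d by (simp add: p_def)
  moreover have "inverse (2 * p) = (1/4) * real d ^ 2 * real n ^ 2"
    by (simp add: p_def field_simps)
  ultimately show ?thesis
    using le_imp_inverse_le[of "2 * p" "1 + Min (switch_eigenvalues n d)"] by auto
qed

end
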